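(* Let $U_{L}:=F_{\mathbf{i}}^{(\boldsymbol n)}\otimes I_{s}$ and $U_{R}:=F_{\mathbf{i}}^{(\boldsymbol n)}\otimes I_{t}$. Define, for $\ell=0,1,2,3$, \[ \Lambda_{\ell}:=\mathrm{blockdiag}\bigl(\widehat S_{\ell}(\boldsymbol k)\bigr)_{\boldsymbol k\in\Lambda_{\boldsymbol n}}, \qquad \widehat S_{\ell}(\boldsymbol k)=\sum_{\boldsymbol\rho\in \mathcal F}p_{\mathrm R}(\boldsymbol\rho)^{(\ell)}\,e^{-2\pi \mathbf{i}\sum_{\ell'=1}^{d} k_{\ell'}\rho_{\ell'}/n_{\ell'}}, \] where $\mathrm{blockdiag}$ denotes the block-diagonal matrix (ordered lexicographically in $\boldsymbol k$) with $s\times t$ diagonal blocks. Then \[ U_{L}\,C_{\boldsymbol n}\bigl(p_{\mathrm{R}}\bigr)\,U_{R}^{*} =\Lambda_{0}+\Lambda_{1}\,\mathbf{i}+\Lambda_{2}\,(A_{\boldsymbol n}\otimes I_{t})\,\mathbf{j} +\Lambda_{3}\,(A_{\boldsymbol n}\otimes I_{t})\,(\mathbf{i}\mathbf{j}). \] Moreover, with $\Pi_{L}:=P\otimes I_{s}$, $\Pi_{R}:=P\otimes I_{t}$, one has the block direct sum \[ \Pi_{L}U_{L}\,C_{\boldsymbol n}\bigl(p_{\mathrm{R}}\bigr)\,U_{R}^{*}\Pi_{R}^{*} =\bigoplus_{\boldsymbol k\in\mathrm{Fix}} \bigl( D_{1}(\boldsymbol k) +D_2(\boldsymbol k) \bigr)\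 \ \oplus\ \bigoplus_{\{\boldsymbol k,-\boldsymbol k\}}\begin{bmatrix} D_{1}(\boldsymbol k) & D_{2}(\boldsymbol k)\\[2pt] D_{2}(-\boldsymbol k) & D_{1}(-\boldsymbol k)\end{bmatrix}, \] where \[ D_{1}(\boldsymbol k):=\widehat S_{0}(\boldsymbol k)+\widehat S_{1}(\boldsymbol k)\,\mathbf{i},\qquad D_{2}(\boldsymbol k):=\bigl(\widehat S_{2}(\boldsymbol k)+\widehat S_{3}(\boldsymbol k)\,\mathbf{i}\bigr)\,\mathbf{j}. \]
   Context: Quaternions $\mathbb{H}$ with units $\mathbf{i},\mathbf{j}$, $\mathbf{k}=\mathbf{i}\mathbf{j}$, $\mathbf{i}^2=\mathbf{j}^2=-1$; $\mathbb{C}_{\mathbf{i}}=\mathrm{span}_{\mathbb{R}}\{1,\mathbf{i}\}$. Let $\boldsymbol n=(n_1,\dots,n_d)\in\mathbb{N}^d$, $\Lambda_{\boldsymbol n}=\prod_{\ell=1}^d\{0,\dots,n_\ell-1\}$ with lexicographic order, $N_{\boldsymbol n}=\prod_\ell n_\ell$. Multilevel periodic shifts $P_{\boldsymbol n}^{(\boldsymbol\rho)}:=P_{n_1}^{(\rho_1)}\otimes\cdots\otimes P_{n_d}^{(\rho_d)}$ with $[P_{n}^{(\rho)}]_{ij}=1$ if $i\equiv j+\rho \pmod n$, else $0$. Given a finite $\mathcal F\subset\mathbb{Z}^d$ and coefficients $p_{\mathrm R}(\boldsymbol\rho)\in\mathbb{H}^{s\times t}$ of the right trigonometric polynomial $p_{\mathrm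 R}(\boldsymbol\theta)=\sum_{\boldsymbol\rho\in\mathcal F}p_{\mathrm R}(\boldsymbol\rho)e^{-\mathbf{i}\langle\boldsymbol\rho,\boldsymbol\theta\rangle}$, the $d$-level $s\times t$ block circulant is $C_{\boldsymbol n}(p_{\mathrm R}):=\sum_{\boldsymbol\rho\in\mathcal F}P_{\boldsymbol n}^{(\boldsymbol\rho)}\otimes p_{\mathrm R}(\boldsymbol\rho)\in\mathbb{H}^{N_{\boldsymbol n}s\times N_{\boldsymbol n}t}$. Write each coefficient in Cartesian form $p_{\mathrm R}(\boldsymbol\rho)=p_{\mathrm R}(\boldsymbol\rho)^{(0)}+p_{\mathrm R}(\boldsymbol\rho)^{(1)}\mathbf{i}+p_{\mathrm R}(\boldsymbol\rho)^{(2)}\mathbf{j}+p_{\mathrm R}(\boldsymbol\rho)^{(3)}(\mathbf{i}\mathbf{j})$ with $p_{\mathrm R}(\boldsymbol\rho)^{(\ell)}\in\mathbb{R}^{s\times t}$. The QDFT is $[F_{\mathbf{i},n}]_{uv}=n^{-1/2}\exp(-2\pi\mathbf{i}uv/n)$, $u,v=0,\dots,n-1$, and $F_{\mathbf{i}}^{(\boldsymbol n)}:=F_{\mathbf{i},n_1}\otimes\cdots\otimes F_{\mathbf{i},n_d}$. $A_n\in\{0,1\}^{n\times n}$ is the permutation mapping $e_s\mapsto e_{(-s)\bmod n}$ and $A_{\boldsymbol n}:=A_{n_1}\otimes\cdots\otimes A_{n_d}$. For $\boldsymbol k\in\Lambda_{\boldsymbol n}$, $-\boldsymbol k:=((-k_1)\bmod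 n_1,\dots,(-k_d)\bmod n_d)$; $\mathrm{Fix}:=\{\boldsymbol k\in\Lambda_{\boldsymbol n}: 2k_\ell\equiv0 \pmod{n_\ell}\ \forall\ell\}$; $\mathcal K:=\{\boldsymbol k\in\Lambda_{\boldsymbol n}\setminus\mathrm{Fix}:\boldsymbol k\prec-\boldsymbol k\}$ (lexicographic order). $P$ is the permutation matrix mapping the canonical basis according to the ordered list: first the elements of $\mathrm{Fix}$ (lexicographically), then the pairs $\boldsymbol k_1,-\boldsymbol k_1,\boldsymbol k_2,-\boldsymbol k_2,\dots$ for $\boldsymbol k_j\in\mathcal K$ in lexicographic order. The second direct sum runs over unordered pairs $\{\boldsymbol k,-\boldsymbol k\}$ with $\boldsymbol k\in\mathcal K$. *)

theory Defs
  imports Complex_Main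
begin

datatype quat = Quat (q0: real) (q1: real) (q2: real) (q3: real)

lemma quat_eq_iff: "a = b \<longleftrightarrow> q0 a = q0 b \<and> q1 a = q1 b \<and> q2 a = q2 b \<and> q3 a = q3 b"
  by (cases a; cases b) auto

instantiation quat :: ring_1
begin
definition "0 = Quat 0 0 0 0"
definition "1 = Quat 1 0 0 0"
definition "a + b = Quat (q0 a + q0 b) (q1 a + q1 b) (q2 a + q2 b) (q3 a + q3 b)"
definition "a - b = Quat (q0 a - q0 b) (q1 a - q1 b) (q2 a - q2 b) (q3 a - q3 b)"
definition "- a = Quat (- q0 a) (- q1 a) (- q2 a) (- q3 a)"
text \<open>Hamilton product with i^2 = j^2 = -1, k = i j.\<close>
definition "a * b = Quat
   (q0 a * q0 b - q1 a * q1 b - q2 a * q2 b - q3 a * q3 b)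
   (q0 a * q1 b + q1 a * q0 b + q2 a * q3 b - q3 a * q2 b)
   (q0 a * q2 b - q1 a * q3 b + q2 a * q0 b + q3 a * q1 b)
   (q0 a * q3 b + q1 a * q2 b - q2 a * q1 b + q3 a * q0 b)"
instance
  by standard (auto simp: quat_eq_iff zero_quat_def one_quat_def plus_quat_def minus_quat_def
      uminus_quat_def times_quat_def algebra_simps)
end

definition qi :: quat where "qi = Quat 0 1 0 0"
definition qj :: quat where "qj = Quat 0 0 1 0"

definition qcnj :: "quat \<Rightarrow> quat" where "qcnj a = Quat (q0 a) (- q1 a) (- q2 a) (- q3 a)"

text \<open>Embedding of the complex numbers as C_i = span{1, i}.\<close>
definition of_cpx :: "complex \<Rightarrow> quat" where "of_cpx z = Quat (Re z) (Im z) 0 0"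

definition qcomp :: "nat \<Rightarrow> quat \<Rightarrow> real" where
  "qcomp l a = (if l = 0 then q0 a else if l = 1 then q1 a else if l = 2 then q2 a else q3 a)"

section \<open>Matrices as index functions with explicit dimensions\<close>

type_synonym qmat = "nat \<Rightarrow> nat \<Rightarrow> quat"

definition meq :: "nat \<Rightarrow> nat \<Rightarrow> qmat \<Rightarrow> qmat \<Rightarrow> bool" where
  "meq m n A B \<longleftrightarrow> (\<forall>i<m. \<forall>j<n. A i j = B i j)"

definition mmul :: "nat \<Rightarrow> qmat \<Rightarrow> qmat \<Rightarrow> qmat" where
  "mmul k A B = (\<lambda>i j. \<Sum>l<k. A i l * B l j)"

definition madd :: "qmat \<Rightarrow> qmat \<Rightarrow> qmat" where
  "madd A B = (\<lambda>i j. A i j + B i j)"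

definition mscal :: "qmat \<Rightarrow> quat \<Rightarrow> qmat" where
  "mscal A q = (\<lambda>i j. A i j * q)"

definition ctr :: "qmat \<Rightarrow> qmat" where
  "ctr A = (\<lambda>i j. qcnj (A j i))"

definition idm :: qmat where "idm = (\<lambda>i j. if i = j then 1 else 0)"

text \<open>Kronecker product of an (m1 x n1) matrix A with an (m2 x n2) matrix B
  (only the dimensions m2, n2 of the second factor are needed).\<close>
definition kron :: "qmat \<Rightarrow> nat \<Rightarrow> nat \<Rightarrow> qmat \<Rightarrow> qmat" where
  "kron A m2 n2 B = (\<lambda>i j. A (i div m2) (j div n2) * B (i mod m2) (j mod n2))"

text \<open>Iterated Kronecker product of square matrices given as (size, matrix) pairs:
  kronL [(n1,A1),...,(nd,Ad)] = A1 \<otimes> ... \<otimes> Ad.\<close>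
fun kronL :: "(nat \<times> qmat) list \<Rightarrow> qmat" where
  "kronL [] = (\<lambda>i j. 1)"
| "kronL ((n, A) # rest) = kron A (prod_list (map fst rest)) (prod_list (map fst rest)) (kronL rest)"

text \<open>Block direct sum of a list of (rows, cols, block) triples.\<close>
fun dsum :: "(nat \<times> nat \<times> qmat) list \<Rightarrow> qmat" where
  "dsum [] = (\<lambda>i j. 0)"
| "dsum ((r, c, M) # rest) = (\<lambda>i j. if i < r \<and> j < c then M i j
      else if r \<le> i \<and> c \<le> j then dsum rest (i - r) (j - c) else 0)"

text \<open>2x2 block matrix [A B; C D] with (s x t) blocks.\<close>
definition blk2 :: "nat \<Rightarrow> nat \<Rightarrow> qmat \<Rightarrow> qmat \<Rightarrow> qmat \<Rightarrow> qmat \<Rightarrow> qmat" where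
  "blk2 s t A B C D = (\<lambda>i j.
     if i < s then (if j < t then A i j else B i (j - t))
     else (if j < t then C (i - s) j else D (i - s) (j - t)))"

text \<open>All multi-indices of \<Lambda>_n, listed in lexicographic order.\<close>
fun lexlist :: "nat list \<Rightarrow> nat list list" where
  "lexlist [] = [[]]"
| "lexlist (n # ns) = concat (map (\<lambda>k. map (Cons k) (lexlist ns)) [0..<n])"

fun lex_less :: "nat list \<Rightarrow> nat list \<Rightarrow> bool" where
  "lex_less (a # as) (b # bs) = (a < b \<or> (a = b \<and> lex_less as bs))"
| "lex_less _ _ = False"

definition mneg :: "nat list \<Rightarrow> nat list \<Rightarrow> nat list" where
  "mneg ns k = map2 (\<lambda>n kl. nat ((- int kl) mod int n)) ns k"

definition isFix :: "nat list \<Rightarrow> nat list \<Rightarrow> bool" where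
  "isFix ns k \<longleftrightarrow> (\<forall>l<length ns. (2 * k ! l) mod (ns ! l) = 0)"

definition inK :: "nat list \<Rightarrow> nat list \<Rightarrow> bool" where
  "inK ns k \<longleftrightarrow> \<not> isFix ns k \<and> lex_less k (mneg ns k)"

text \<open>Ordered list: Fix (lexicographically), then k1, -k1, k2, -k2, ... for kj in K.\<close>
definition ordlist :: "nat list \<Rightarrow> nat list list" where
  "ordlist ns = filter (isFix ns) (lexlist ns)
      @ concat (map (\<lambda>k. [k, mneg ns k]) (filter (inK ns) (lexlist ns)))"

text \<open>Permutation matrix P: row r has its 1 in the column of the r-th element of ordlist,
  i.e. P maps e_{ordlist!r} to e_r.\<close>
definition Pperm :: "nat list \<Rightarrow> qmat" where
  "Pperm ns = (\<lambda>r c. if lexlist ns ! c = ordlist ns ! r then 1 else 0)"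

definition shiftm :: "nat \<Rightarrow> int \<Rightarrow> qmat" where
  "shiftm n \<rho> = (\<lambda>i j. if (int i - (int j + \<rho>)) mod int n = 0 then 1 else 0)"

definition mshift :: "nat list \<Rightarrow> int list \<Rightarrow> qmat" where
  "mshift ns \<rho> = kronL (map2 (\<lambda>n r. (n, shiftm n r)) ns \<rho>)"

definition circ :: "nat list \<Rightarrow> nat \<Rightarrow> nat \<Rightarrow> int list set \<Rightarrow> (int list \<Rightarrow> qmat) \<Rightarrow> qmat" where
  "circ ns s t F p = (\<lambda>i j. \<Sum>\<rho>\<in>F. kron (mshift ns \<rho>) s t (p \<rho>) i j)"

definition qdft1 :: "nat \<Rightarrow> qmat" where
  "qdft1 n = (\<lambda>u v. of_cpx (exp (- 2 * pi * \<i> * of_nat (u * v) / of_nat n) / of_real (sqrt (real n))))"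

definition qdft :: "nat list \<Rightarrow> qmat" where
  "qdft ns = kronL (map (\<lambda>n. (n, qdft1 n)) ns)"

definition flip1 :: "nat \<Rightarrow> qmat" where
  "flip1 n = (\<lambda>i j. if i = nat ((- int j) mod int n) then 1 else 0)"

definition flipm :: "nat list \<Rightarrow> qmat" where
  "flipm ns = kronL (map (\<lambda>n. (n, flip1 n)) ns)"

definition Shat :: "nat list \<Rightarrow> int list set \<Rightarrow> (int list \<Rightarrow> qmat) \<Rightarrow> nat \<Rightarrow> nat list \<Rightarrow> qmat" where
  "Shat ns F p l k = (\<lambda>a b. \<Sum>\<rho>\<in>F. of_cpx (of_real (qcomp l (p \<rho> a b)) *
      exp (- 2 * pi * \<i> * of_real (\<Sum>l'<length ns. real (k ! l') * real_of_int (\<rho> ! l') / real (ns ! l')))))"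

text \<open>Block diagonal matrix with (s x t) blocks B(k), k running over \<Lambda>_n lexicographically.\<close>
definition blockdiag :: "nat list \<Rightarrow> nat \<Rightarrow> nat \<Rightarrow> (nat list \<Rightarrow> qmat) \<Rightarrow> qmat" where
  "blockdiag ns s t B = (\<lambda>i j. if i div s = j div t
      then B (lexlist ns ! (i div s)) (i mod s) (j mod t) else 0)"

definition D1 :: "nat list \<Rightarrow> int list set \<Rightarrow> (int list \<Rightarrow> qmat) \<Rightarrow> nat list \<Rightarrow> qmat" where
  "D1 ns F p k = madd (Shat ns F p 0 k) (mscal (Shat ns F p 1 k) qi)"

definition D2 :: "nat list \<Rightarrow> int list set \<Rightarrow> (int list \<Rightarrow> qmat) \<Rightarrow> nat list \<Rightarrow> qmat" where
  "D2 ns F p k = mscal (madd (Shat ns F p 2 k) (mscal (Shat ns F p 3 k) qi)) qj"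

end

theory Submission
  imports Defs
begin

text \<open>
Apart from the coefficients of the circulant, every matrix in the statement has entries in
C_i, so the computations are done over the complex numbers, where multiplication commutes,
and transported to the quaternions by of_cpx. The only quaternionic input is j z = (cnj z) j
for complex z: writing a coefficient as q = c + d j with complex c, d gives
z q w = z c w + z d (cnj w) j. Hence in F C F^* the C_i-part of the coefficients meets
F S F^* and their j-part meets F S F^T, where S runs over the multilevel shifts.
Level by level (all these matrices are Kronecker products) the DFT diagonalises the cyclic
shift: F S F^* is diagonal with entries e^(-2 pi i <k, rho/n>), and F S F^T is the same
diagonal times the reflection A, k -> -k. So block (k, k') of the transformed circulant is
[k' = k] D1(k) + [k' = -k] D2(k), which is the first identity. The permutation P only
re-keys these blocks, and listing the keys as the fixed points of k -> -k followed by the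
pairs {k, -k} exhibits the block direct sum.
\<close>

section \<open>Complex numbers inside the quaternions\<close>

lemma of_cpx_add: "of_cpx (a + b) = of_cpx a + of_cpx b"
  by (simp add: of_cpx_def plus_quat_def)

lemma of_cpx_mult: "of_cpx (a * b) = of_cpx a * of_cpx b"
  by (simp add: of_cpx_def times_quat_def)

lemma of_cpx_0 [simp]: "of_cpx 0 = 0"
  by (simp add: of_cpx_def zero_quat_def)

lemma of_cpx_1 [simp]: "of_cpx 1 = 1"
  by (simp add: of_cpx_def one_quat_def)

lemma of_cpx_sum: "of_cpx (sum f A) = (\<Sum>x\<in>A. of_cpx (f x))"
  by (induction A rule: infinite_finite_induct) (simp_all add: of_cpx_add)

lemma of_cpx_mult_qi: "of_cpx a * qi = of_cpx (a * \<i>)"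
  by (simp add: of_cpx_def qi_def times_quat_def)

lemma of_cpx_indicator: "of_cpx (if P then 1 else 0) = (if P then 1 else 0)"
  by simp

lemma qcnj_of_cpx: "qcnj (of_cpx z) = of_cpx (cnj z)"
  by (simp add: qcnj_def of_cpx_def)

lemma qcnj_indicator: "qcnj (if P then 1 else 0) = (if P then 1 else 0)"
  by (simp add: qcnj_def one_quat_def zero_quat_def)

lemma qj_mult_of_cpx: "qj * of_cpx z = of_cpx (cnj z) * qj"
  by (simp add: quat_eq_iff of_cpx_def qj_def times_quat_def)

definition cpart :: "quat \<Rightarrow> complex" where "cpart a = Complex (q0 a) (q1 a)"

definition jpart :: "quat \<Rightarrow> complex" where "jpart a = Complex (q2 a) (q3 a)"

lemma quat_cpart_jpart: "a = of_cpx (cpart a) + of_cpx (jpart a) * qj"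
  by (simp add: quat_eq_iff of_cpx_def cpart_def jpart_def times_quat_def plus_quat_def qj_def)

lemma of_cpx_mult_quat_mult_of_cpx:
  "of_cpx a * p * of_cpx b = of_cpx (a * cpart p * b) + of_cpx (a * jpart p * cnj b) * qj"
proof -
  have "of_cpx a * p * of_cpx b
      = of_cpx a * of_cpx (cpart p) * of_cpx b + of_cpx a * of_cpx (jpart p) * (qj * of_cpx b)"
    by (subst quat_cpart_jpart[of p]) (simp add: algebra_simps)
  then show ?thesis
    by (simp add: qj_mult_of_cpx of_cpx_mult mult.assoc mult.left_commute)
qed

lemma sum_of_cpx_sandwich:
  "(\<Sum>y\<in>B. \<Sum>x\<in>A. of_cpx (a x y) * q * of_cpx (b y))
   = of_cpx ((\<Sum>y\<in>B. \<Sum>x\<in>A. a x y * b y) * cpart q)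
   + of_cpx ((\<Sum>y\<in>B. \<Sum>x\<in>A. a x y * cnj (b y)) * jpart q) * qj"
  unfolding of_cpx_mult_quat_mult_of_cpx sum.distrib
  by (simp add: of_cpx_sum sum_distrib_left sum_distrib_right mult_ac)

section \<open>Roots of unity and the one-level DFT\<close>

definition unit_root :: "nat \<Rightarrow> int \<Rightarrow> complex" where
  "unit_root n m = cis (- 2 * pi * of_int m / of_nat n)"

lemma unit_root_conv_exp: "unit_root n m = exp (- 2 * of_real pi * \<i> * of_int m / of_nat n)"
  unfolding unit_root_def cis_conv_exp by (simp add: mult_ac)

lemma unit_root_add: "unit_root n (a + b) = unit_root n a * unit_root n b"
  by (simp add: unit_root_def cis_mult ring_distribs add_divide_distrib diff_divide_distrib)

lemma unit_root_mult_nat: "unit_root n (d * int y) = unit_root n d ^ y"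
  by (simp add: unit_root_def DeMoivre mult_ac)

lemma cnj_unit_root: "cnj (unit_root n m) = unit_root n (- m)"
  by (simp add: unit_root_def cis_cnj)

lemma cis_eq_1_iff: "cis x = 1 \<longleftrightarrow> (\<exists>k::int. x = of_int k * 2 * pi)"
proof -
  have "cis x = 1 \<longleftrightarrow> cos x = 1"
    using sin_cos_squared_add[of x] by (auto simp: complex_eq_iff power2_eq_square)
  then show ?thesis by (simp add: cos_one_2pi_int)
qed

lemma unit_root_eq_1_iff:
  assumes "0 < n" shows "unit_root n m = 1 \<longleftrightarrow> int n dvd m"
proof -
  have "unit_root n m = 1 \<longleftrightarrow> (\<exists>k::int. real_of_int m = real_of_int (- k * int n))"
    unfolding unit_root_def cis_eq_1_iff using assms
    by (intro ex_cong1)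
      (auto simp: field_simps,
        metis mult_minus_right mult_left_cancel pi_neq_zero minus_equation_iff)
  also have "\<dots> \<longleftrightarrow> int n dvd m"
    unfolding of_int_eq_iff by (auto simp: dvd_def intro: exI[of _ "- _"])
  finally show ?thesis .
qed

lemma unit_root_mod:
  assumes "0 < n" shows "unit_root n (m mod int n) = unit_root n m"
proof -
  have "unit_root n (int n * (m div int n)) = 1"
    using unit_root_eq_1_iff[OF assms] by simp
  then show ?thesis
    using unit_root_add[of n "m mod int n" "int n * (m div int n)"] by simp
qed

lemma sum_unit_root_mult:
  assumes "0 < n"
  shows "(\<Sum>y<n. unit_root n (d * int y)) = (if int n dvd d then of_nat n else 0)"
proof (cases "int n dvd d")
  case True
  then have "unit_root n d = 1" using unit_root_eq_1_iff[OF assms] by simp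
  with True show ?thesis by (simp add: unit_root_mult_nat)
next
  case False
  have "unit_root n d ^ n = 1"
    using unit_root_eq_1_iff[OF assms, of "d * int n"] by (simp add: unit_root_mult_nat)
  with False show ?thesis
    using unit_root_eq_1_iff[OF assms] by (simp add: unit_root_mult_nat geometric_sum)
qed

lemma sum_unit_root_shift:
  assumes "0 < n"
  shows "(\<Sum>y<n. unit_root n (int u * (int y + r)) * unit_root n (c * int y))
       = unit_root n (int u * r) * (if int n dvd (int u + c) then of_nat n else 0)"
proof -
  have "unit_root n (int u * (int y + r)) * unit_root n (c * int y)
      = unit_root n (int u * r) * unit_root n ((int u + c) * int y)" for y
    unfolding unit_root_add[symmetric] by (simp add: algebra_simps)
  then show ?thesis
    by (simp add: sum_distrib_left[symmetric] sum_unit_root_mult[OF assms])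
qed

lemma int_dvd_diff_iff_eq:
  assumes "u < n" "v < n" shows "int n dvd (int u - int v) \<longleftrightarrow> u = v"
  using assms by (simp flip: mod_eq_dvd_iff)

lemma int_dvd_add_iff_eq_neg_mod:
  assumes "u < n" shows "int n dvd (int u + int v) \<longleftrightarrow> u = nat (- int v mod int n)"
proof -
  have "int n dvd (int u + int v) \<longleftrightarrow> int u mod int n = - int v mod int n"
    by (simp add: mod_eq_dvd_iff)
  also have "\<dots> \<longleftrightarrow> u = nat (- int v mod int n)"
    using assms by auto
  finally show ?thesis .
qed

type_synonym cmat = "nat \<Rightarrow> nat \<Rightarrow> complex"

definition cmmul :: "nat \<Rightarrow> cmat \<Rightarrow> cmat \<Rightarrow> cmat" where
  "cmmul k A B = (\<lambda>i j. \<Sum>l<k. A i l * B l j)"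

definition cadj :: "cmat \<Rightarrow> cmat" where "cadj A = (\<lambda>i j. cnj (A j i))"

definition ctransp :: "cmat \<Rightarrow> cmat" where "ctransp A = (\<lambda>i j. A j i)"

definition cidm :: cmat where "cidm = (\<lambda>i j. if i = j then 1 else 0)"

definition cdft1 :: "nat \<Rightarrow> cmat" where
  "cdft1 n = (\<lambda>u v. exp (- 2 * pi * \<i> * of_nat (u * v) / of_nat n) / of_real (sqrt (real n)))"

definition cshift1 :: "nat \<Rightarrow> int \<Rightarrow> cmat" where
  "cshift1 n r = (\<lambda>i j. if (int i - (int j + r)) mod int n = 0 then 1 else 0)"

definition cflip1 :: "nat \<Rightarrow> cmat" where
  "cflip1 n = (\<lambda>i j. if i = nat (- int j mod int n) then 1 else 0)"

lemma cdft1_conv_unit_root: "cdft1 n u v = unit_root n (int u * int v) / of_real (sqrt (real n))"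
  by (simp add: cdft1_def unit_root_conv_exp)

lemma cdft1_cshift1:
  assumes "0 < n"
  shows "cmmul n (cdft1 n) (cshift1 n r) u y
       = unit_root n (int u * (int y + r)) / of_real (sqrt (real n))"
proof -
  define x0 where "x0 = nat ((int y + r) mod int n)"
  have x0: "x0 < n" "int x0 = (int y + r) mod int n"
    using assms by (simp_all add: x0_def nat_less_iff)
  have "cshift1 n r x y = (if x = x0 then 1 else 0)" if "x < n" for x
    using that x0 by (auto simp: cshift1_def mod_eq_dvd_iff[symmetric] mod_eq_0_iff_dvd)
  then have "cmmul n (cdft1 n) (cshift1 n r) u y = (\<Sum>x<n. if x = x0 then cdft1 n u x else 0)"
    unfolding cmmul_def by (intro sum.cong) auto
  also have "\<dots> = unit_root n (int u * int x0) / of_real (sqrt (real n))"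
    using x0(1) by (simp add: cdft1_conv_unit_root)
  also have "unit_root n (int u * int x0) = unit_root n (int u * (int y + r))"
    using unit_root_mod[OF assms] by (metis x0(2) mod_mult_right_eq)
  finally show ?thesis .
qed

lemma sqrt_mult_sqrt_complex:
  "of_real (sqrt (real n)) * of_real (sqrt (real n)) = (of_nat n :: complex)"
  by (simp flip: of_real_mult)

lemma cdft1_cshift1_mult:
  assumes "0 < n"
  shows "cmmul n (cmmul n (cdft1 n) (cshift1 n r))
           (\<lambda>y v. unit_root n (c v * int y) / of_real (sqrt (real n))) u v
       = unit_root n (int u * r) * (if int n dvd (int u + c v) then 1 else 0)"
proof -
  have "cmmul n (cmmul n (cdft1 n) (cshift1 n r))
          (\<lambda>y v. unit_root n (c v * int y) / of_real (sqrt (real n))) u v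
      = (\<Sum>y<n. unit_root n (int u * (int y + r)) * unit_root n (c v * int y)) / of_nat n"
    unfolding cmmul_def[of n "cmmul n (cdft1 n) (cshift1 n r)"]
    by (simp add: cdft1_cshift1[OF assms] sum_divide_distrib sqrt_mult_sqrt_complex[symmetric])
  then show ?thesis
    using assms by (simp add: sum_unit_root_shift)
qed

lemma cdft1_cshift1_cdft1_adj:
  assumes "0 < n" "u < n" "v < n"
  shows "cmmul n (cmmul n (cdft1 n) (cshift1 n r)) (cadj (cdft1 n)) u v
       = unit_root n (int u * r) * cidm u v"
proof -
  have "cadj (cdft1 n) = (\<lambda>y v. unit_root n (- int v * int y) / of_real (sqrt (real n)))"
    by (simp add: cadj_def cdft1_conv_unit_root cnj_unit_root fun_eq_iff)
  then show ?thesis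
    using cdft1_cshift1_mult[OF assms(1), of r "\<lambda>v. - int v"] int_dvd_diff_iff_eq[OF assms(2,3)]
    by (simp add: cidm_def)
qed

lemma cdft1_cshift1_cdft1_transp:
  assumes "0 < n" "u < n"
  shows "cmmul n (cmmul n (cdft1 n) (cshift1 n r)) (ctransp (cdft1 n)) u v
       = unit_root n (int u * r) * cflip1 n u v"
proof -
  have "ctransp (cdft1 n) = (\<lambda>y v. unit_root n (int v * int y) / of_real (sqrt (real n)))"
    by (simp add: ctransp_def cdft1_conv_unit_root fun_eq_iff mult.commute)
  then show ?thesis
    using cdft1_cshift1_mult[OF assms(1), of r int] int_dvd_add_iff_eq_neg_mod[OF assms(2)]
    by (simp add: cflip1_def)
qed

section \<open>Kronecker products and the multilevel DFT\<close>

lemma sum_split_mult: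
  fixes f :: "nat \<Rightarrow> 'a::comm_monoid_add"
  shows "(\<Sum>x<M * m. f x) = (\<Sum>y<M. \<Sum>z<m. f (y * m + z))"
proof -
  have "(\<Sum>x<M * m. f x) = (\<Sum>y<M. sum f {y * m..<y * m + m})"
    by (rule sum.nat_group[symmetric])
  also have "\<dots> = (\<Sum>y<M. \<Sum>z<m. f (y * m + z))"
    by (simp add: sum.shift_bounds_nat_ivl[of f 0 _ m, simplified] add.commute atLeast0LessThan)
  finally show ?thesis .
qed

definition ckron :: "cmat \<Rightarrow> nat \<Rightarrow> cmat \<Rightarrow> cmat" where
  "ckron A m B = (\<lambda>i j. A (i div m) (j div m) * B (i mod m) (j mod m))"

fun ckronL :: "(nat \<times> cmat) list \<Rightarrow> cmat" where
  "ckronL [] = (\<lambda>i j. 1)"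
| "ckronL ((n, A) # rest) = ckron A (prod_list (map fst rest)) (ckronL rest)"

lemma ckron_mixed_product:
  assumes "0 < m"
  shows "cmmul (M * m) (ckron A m B) (ckron C m D) = ckron (cmmul M A C) m (cmmul m B D)"
proof (intro ext)
  fix i j
  have "cmmul (M * m) (ckron A m B) (ckron C m D) i j
     = (\<Sum>y<M. \<Sum>z<m. A (i div m) y * C y (j div m) * (B (i mod m) z * D z (j mod m)))"
    using assms by (simp add: cmmul_def ckron_def sum_split_mult mult_ac)
  then show "cmmul (M * m) (ckron A m B) (ckron C m D) i j
      = ckron (cmmul M A C) m (cmmul m B D) i j"
    by (simp add: ckron_def cmmul_def sum_product)
qed

lemma ckronL_map_hom:
  assumes "\<And>A m B. \<phi> (ckron A m B) = ckron (\<phi> A) m (\<phi> B)" and "\<phi> (\<lambda>i j. 1) = (\<lambda>i j. 1)"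
  shows "\<phi> (ckronL (map (\<lambda>n. (n, A n)) ns)) = ckronL (map (\<lambda>n. (n, \<phi> (A n))) ns)"
  by (induction ns) (simp_all add: assms o_def)

lemma cadj_ckron: "cadj (ckron A m B) = ckron (cadj A) m (cadj B)"
  by (simp add: cadj_def ckron_def fun_eq_iff)

lemma ctransp_ckron: "ctransp (ckron A m B) = ckron (ctransp A) m (ctransp B)"
  by (simp add: ctransp_def ckron_def fun_eq_iff)

lemma distinct_lexlist: "distinct (lexlist ns)"
proof (induction ns)
  case (Cons n ns)
  have "distinct (concat (map (\<lambda>k. map (Cons k) L) xs))" if "distinct xs" "distinct L" for xs L
    using that by (induction xs) (auto simp: distinct_map)
  from this[OF _ Cons.IH] show ?case by simp
qed simp

lemma nth_concat_uniform:
  assumes "\<forall>x\<in>set xs. length (f x) = m" "u < length xs * m"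
  shows "concat (map f xs) ! u = f (xs ! (u div m)) ! (u mod m)"
  using assms
proof (induction xs arbitrary: u)
  case (Cons x xs)
  show ?case
  proof (cases "u < m")
    case False
    then have "0 < m" using Cons.prems by (cases m) auto
    with False have "u - m < length xs * m"
      "u div m = Suc ((u - m) div m)" "u mod m = (u - m) mod m"
      using Cons.prems by (auto simp: le_div_geq le_mod_geq)
    then show ?thesis using Cons False by (simp add: nth_append)
  qed (use Cons.prems in \<open>simp add: nth_append\<close>)
qed simp

lemma index_div_mod_bounds:
  fixes u n N :: nat
  assumes "u < n * N"
  shows "0 < n" "0 < N" "u div N < n" "u mod N < N"
proof -
  have "0 < n * N" using assms by linarith
  then show "0 < n" "0 < N" by simp_all
  then show "u mod N < N" by simp
  show "u div N < n" using assms by (simp add: less_mult_imp_div_less mult.commute)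
qed

lemma length_lexlist [simp]: "length (lexlist ns) = prod_list ns"
  by (induction ns) (simp_all add: length_concat o_def sum_list_triv)

lemma lexlist_nth_Cons:
  assumes "u < n * prod_list ns"
  shows "lexlist (n # ns) ! u = u div prod_list ns # lexlist ns ! (u mod prod_list ns)"
proof -
  have "lexlist (n # ns) ! u
      = map (Cons ([0..<n] ! (u div prod_list ns))) (lexlist ns) ! (u mod prod_list ns)"
    unfolding lexlist.simps by (rule nth_concat_uniform) (use assms in auto)
  also have "\<dots> = u div prod_list ns # lexlist ns ! (u mod prod_list ns)"
    using index_div_mod_bounds[OF assms] by simp
  finally show ?thesis .
qed

lemma mneg_Cons: "mneg (n # ns) (a # k) = nat (- int a mod int n) # mneg ns k"
  by (simp add: mneg_def)

definition cdft :: "nat list \<Rightarrow> cmat" where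
  "cdft ns = ckronL (map (\<lambda>n. (n, cdft1 n)) ns)"

definition cshift :: "nat list \<Rightarrow> int list \<Rightarrow> cmat" where
  "cshift ns \<rho> = ckronL (map2 (\<lambda>n r. (n, cshift1 n r)) ns \<rho>)"

definition cflip :: "nat list \<Rightarrow> cmat" where
  "cflip ns = ckronL (map (\<lambda>n. (n, cflip1 n)) ns)"

definition fchar :: "nat list \<Rightarrow> nat list \<Rightarrow> int list \<Rightarrow> complex" where
  "fchar ns k \<rho> = exp (- 2 * pi * \<i> *
     of_real (\<Sum>l<length ns. real (k ! l) * real_of_int (\<rho> ! l) / real (ns ! l)))"

lemma cshift_Cons:
  "length \<rho> = length ns \<Longrightarrow>
   cshift (n # ns) (r # \<rho>) = ckron (cshift1 n r) (prod_list ns) (cshift ns \<rho>)"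
  by (simp add: cshift_def o_def case_prod_unfold)

lemma fchar_Nil: "fchar [] k \<rho> = 1"
  by (simp add: fchar_def)

lemma fchar_Cons: "fchar (n # ns) (a # k) (r # \<rho>) = unit_root n (int a * r) * fchar ns k \<rho>"
proof -
  have "(\<Sum>l<length (n # ns). real ((a # k) ! l) * real_of_int ((r # \<rho>) ! l) / real ((n # ns) ! l))
     = real a * real_of_int r / real n
       + (\<Sum>l<length ns. real (k ! l) * real_of_int (\<rho> ! l) / real (ns ! l))"
    by (simp only: length_Cons sum.lessThan_Suc_shift) simp
  then show ?thesis
    by (simp add: fchar_def unit_root_conv_exp exp_add[symmetric] ring_distribs add_divide_distrib)
qed

lemma cdft_cshift_mult_ckronL:
  assumes one_level: "\<And>n r u v. 0 < n \<Longrightarrow> u < n \<Longrightarrow> v < n \<Longrightarrow>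
      cmmul n (cmmul n (cdft1 n) (cshift1 n r)) (R n) u v = unit_root n (int u * r) * G n u v"
    and "length \<rho> = length ns" "u < prod_list ns" "v < prod_list ns"
  shows "cmmul (prod_list ns) (cmmul (prod_list ns) (cdft ns) (cshift ns \<rho>))
           (ckronL (map (\<lambda>n. (n, R n)) ns)) u v
       = fchar ns (lexlist ns ! u) \<rho> * ckronL (map (\<lambda>n. (n, G n)) ns) u v"
  using assms(2-)
proof (induction ns arbitrary: \<rho> u v)
  case Nil
  then show ?case by (simp add: cmmul_def cdft_def cshift_def fchar_Nil)
next
  case (Cons n ns)
  obtain r \<rho>' where \<rho>: "\<rho> = r # \<rho>'" "length \<rho>' = length ns"
    using Cons.prems(1) by (cases \<rho>) auto
  define N where "N = prod_list ns"
  have u: "0 < n" "0 < N" "u div N < n" "u mod N < N" and v: "v div N < n" "v mod N < N"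
    using index_div_mod_bounds[of u n N] index_div_mod_bounds[of v n N] Cons.prems(2,3)
    by (simp_all add: N_def)
  have "cmmul (n * N)
          (cmmul (n * N) (ckron (cdft1 n) N (cdft ns)) (ckron (cshift1 n r) N (cshift ns \<rho>')))
          (ckron (R n) N (ckronL (map (\<lambda>n. (n, R n)) ns))) u v
     = cmmul n (cmmul n (cdft1 n) (cshift1 n r)) (R n) (u div N) (v div N)
       * cmmul N (cmmul N (cdft ns) (cshift ns \<rho>')) (ckronL (map (\<lambda>n. (n, R n)) ns))
           (u mod N) (v mod N)"
    unfolding ckron_mixed_product[OF u(2)] by (simp add: ckron_def)
  also have "\<dots> = fchar (n # ns) (lexlist (n # ns) ! u) \<rho> * ckronL (map (\<lambda>n. (n, G n)) (n # ns)) u v"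
    using one_level[OF u(1,3) v(1)] Cons.IH[OF \<rho>(2) u(4)[unfolded N_def] v(2)[unfolded N_def]]
      lexlist_nth_Cons[of u n ns] Cons.prems(2)
    by (simp add: \<rho> fchar_Cons ckron_def N_def o_def)
  finally show ?case
    by (simp add: \<rho> cshift_Cons cdft_def N_def o_def)
qed

lemma ckronL_cidm:
  assumes "u < prod_list ns" "v < prod_list ns"
  shows "ckronL (map (\<lambda>n. (n, cidm)) ns) u v = cidm u v"
  using assms
proof (induction ns arbitrary: u v)
  case (Cons n ns)
  then show ?case
    using index_div_mod_bounds[of u n "prod_list ns"] index_div_mod_bounds[of v n "prod_list ns"]
    by (auto simp: o_def ckron_def cidm_def) (metis div_mult_mod_eq)
qed (simp add: cidm_def)

lemma cflip1_eq_neg_mod: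
  assumes "u < n" "v < n"
  shows "cflip1 n u v = (if v = nat (- int u mod int n) then 1 else 0)"
  using int_dvd_add_iff_eq_neg_mod[OF assms(1), of v] int_dvd_add_iff_eq_neg_mod[OF assms(2), of u]
  by (simp add: cflip1_def add.commute)

lemma cflip_eq_mneg:
  assumes "u < prod_list ns" "v < prod_list ns"
  shows "cflip ns u v = (if lexlist ns ! v = mneg ns (lexlist ns ! u) then 1 else 0)"
  using assms
proof (induction ns arbitrary: u v)
  case Nil
  then show ?case by (simp add: cflip_def mneg_def)
next
  case (Cons n ns)
  define N where "N = prod_list ns"
  have u: "u div N < n" "u mod N < N" and v: "v div N < n" "v mod N < N"
    using index_div_mod_bounds[of u n N] index_div_mod_bounds[of v n N] Cons.prems
    by (simp_all add: N_def)
  have "cflip (n # ns) u v = cflip1 n (u div N) (v div N) * cflip ns (u mod N) (v mod N)"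
    by (simp add: cflip_def ckron_def N_def o_def)
  then show ?case
    using Cons.IH[OF u(2)[unfolded N_def] v(2)[unfolded N_def], unfolded N_def[symmetric]]
      cflip1_eq_neg_mod[OF u(1) v(1)]
      lexlist_nth_Cons[of u n ns] lexlist_nth_Cons[of v n ns] Cons.prems
    by (simp add: N_def mneg_Cons)
qed

lemma cdft_cshift_cdft_adj:
  assumes "length \<rho> = length ns" "u < prod_list ns" "v < prod_list ns"
  shows "cmmul (prod_list ns) (cmmul (prod_list ns) (cdft ns) (cshift ns \<rho>)) (cadj (cdft ns)) u v
       = (if u = v then fchar ns (lexlist ns ! u) \<rho> else 0)"
proof -
  have "cadj (cdft ns) = ckronL (map (\<lambda>n. (n, cadj (cdft1 n))) ns)"
    unfolding cdft_def by (rule ckronL_map_hom[OF cadj_ckron]) (simp add: cadj_def)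
  then show ?thesis
    using cdft_cshift_mult_ckronL[where G = "\<lambda>n. cidm", OF cdft1_cshift1_cdft1_adj assms]
      ckronL_cidm[OF assms(2,3)]
    by (simp add: cidm_def)
qed

lemma cdft_cshift_cdft_transp:
  assumes "length \<rho> = length ns" "u < prod_list ns" "v < prod_list ns"
  shows "cmmul (prod_list ns) (cmmul (prod_list ns) (cdft ns) (cshift ns \<rho>)) (ctransp (cdft ns)) u v
       = (if lexlist ns ! v = mneg ns (lexlist ns ! u) then fchar ns (lexlist ns ! u) \<rho> else 0)"
proof -
  have "ctransp (cdft ns) = ckronL (map (\<lambda>n. (n, ctransp (cdft1 n))) ns)"
    unfolding cdft_def by (rule ckronL_map_hom[OF ctransp_ckron]) (simp add: ctransp_def)
  then show ?thesis
    using cdft_cshift_mult_ckronL[where G = cflip1, OF cdft1_cshift1_cdft1_transp assms]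
      cflip_eq_mneg[OF assms(2,3)]
    by (simp add: cflip_def)
qed

section \<open>The first identity\<close>

lemma kronL_of_cpx:
  "kronL (map (\<lambda>x. (f x, \<lambda>i j. of_cpx (g x i j))) xs)
   = (\<lambda>i j. of_cpx (ckronL (map (\<lambda>x. (f x, g x)) xs) i j))"
  by (induction xs) (simp_all add: kron_def ckron_def of_cpx_mult o_def)

lemma qdft_eq_of_cpx: "qdft ns = (\<lambda>i j. of_cpx (cdft ns i j))"
  using kronL_of_cpx[of id cdft1 ns] by (simp add: qdft_def qdft1_def cdft1_def cdft_def)

lemma flipm_eq_of_cpx: "flipm ns = (\<lambda>i j. of_cpx (cflip ns i j))"
  using kronL_of_cpx[of id cflip1 ns]
  by (simp add: flipm_def flip1_def cflip1_def cflip_def flip: of_cpx_indicator)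

lemma mshift_eq_of_cpx: "mshift ns \<rho> = (\<lambda>i j. of_cpx (cshift ns \<rho> i j))"
  using kronL_of_cpx[of fst "\<lambda>x. cshift1 (fst x) (snd x)" "zip ns \<rho>"]
  by (simp add: mshift_def shiftm_def cshift1_def cshift_def case_prod_unfold
      flip: of_cpx_indicator)

lemma ctr_kron_idm: "ctr (kron A m m idm) = kron (ctr A) m m idm"
  by (simp add: ctr_def kron_def idm_def fun_eq_iff qcnj_def times_quat_def
      zero_quat_def one_quat_def)

lemma sum_kron_idm_left:
  assumes "0 < s"
  shows "(\<Sum>a<N * s. kron A s s idm i a * g a) = (\<Sum>x<N. A (i div s) x * g (x * s + i mod s))"
proof -
  have "(\<Sum>z<s. kron A s s idm i (x * s + z) * g (x * s + z))
      = A (i div s) x * g (x * s + i mod s)" for x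
  proof -
    have "(\<Sum>z<s. kron A s s idm i (x * s + z) * g (x * s + z))
        = (\<Sum>z<s. if z = i mod s then A (i div s) x * g (x * s + i mod s) else 0)"
      by (intro sum.cong) (auto simp: kron_def idm_def)
    then show ?thesis using assms by simp
  qed
  then show ?thesis by (simp add: sum_split_mult)
qed

lemma sum_kron_idm_right:
  assumes "0 < t"
  shows "(\<Sum>c<N * t. g c * kron B t t idm c j) = (\<Sum>y<N. g (y * t + j mod t) * B y (j div t))"
proof -
  have "(\<Sum>z<t. g (y * t + z) * kron B t t idm (y * t + z) j)
      = g (y * t + j mod t) * B y (j div t)" for y
  proof -
    have "(\<Sum>z<t. g (y * t + z) * kron B t t idm (y * t + z) j)
        = (\<Sum>z<t. if z = j mod t then g (y * t + j mod t) * B y (j div t) else 0)"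
      by (intro sum.cong) (auto simp: kron_def idm_def)
    then show ?thesis using assms by simp
  qed
  then show ?thesis by (simp add: sum_split_mult)
qed

definition mirror_blocks ::
  "nat \<Rightarrow> nat \<Rightarrow> ('k \<Rightarrow> qmat) \<Rightarrow> ('k \<Rightarrow> qmat) \<Rightarrow> ('k \<Rightarrow> 'k) \<Rightarrow> 'k list \<Rightarrow> qmat" where
  "mirror_blocks s t d1 d2 mn ks = (\<lambda>i j.
     if i div s < length ks \<and> j div t < length ks then
       (if ks ! (j div t) = ks ! (i div s) then d1 (ks ! (i div s)) (i mod s) (j mod t) else 0)
     + (if ks ! (j div t) = mn (ks ! (i div s)) then d2 (ks ! (i div s)) (i mod s) (j mod t) else 0)
     else 0)"

lemma circ_entry:
  assumes "\<alpha> < s" "\<delta> < t"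
  shows "circ ns s t F p (x * s + \<alpha>) (y * t + \<delta>) = (\<Sum>\<rho>\<in>F. of_cpx (cshift ns \<rho> x y) * p \<rho> \<alpha> \<delta>)"
  using assms by (simp add: circ_def kron_def mshift_eq_of_cpx)

lemma D1_eq_of_cpx: "D1 ns F p k a b = of_cpx (\<Sum>\<rho>\<in>F. cpart (p \<rho> a b) * fchar ns k \<rho>)"
proof -
  have "D1 ns F p k a b = Shat ns F p 0 k a b + Shat ns F p 1 k a b * qi"
    by (simp add: D1_def madd_def mscal_def)
  also have "\<dots> = of_cpx (\<Sum>\<rho>\<in>F.
      (of_real (q0 (p \<rho> a b)) + of_real (q1 (p \<rho> a b)) * \<i>) * fchar ns k \<rho>)"
    by (simp add: Shat_def fchar_def qcomp_def sum_distrib_right of_cpx_mult_qi of_cpx_sum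
        sum.distrib of_cpx_add algebra_simps)
  finally show ?thesis by (simp add: cpart_def Complex_eq mult_ac)
qed

lemma D2_eq_of_cpx: "D2 ns F p k a b = of_cpx (\<Sum>\<rho>\<in>F. jpart (p \<rho> a b) * fchar ns k \<rho>) * qj"
proof -
  have "D2 ns F p k a b = (Shat ns F p 2 k a b + Shat ns F p 3 k a b * qi) * qj"
    by (simp add: D2_def madd_def mscal_def)
  also have "Shat ns F p 2 k a b + Shat ns F p 3 k a b * qi
      = of_cpx (\<Sum>\<rho>\<in>F.
          (of_real (q2 (p \<rho> a b)) + of_real (q3 (p \<rho> a b)) * \<i>) * fchar ns k \<rho>)"
    by (simp add: Shat_def fchar_def qcomp_def sum_distrib_right of_cpx_mult_qi of_cpx_sum
        sum.distrib of_cpx_add algebra_simps)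
  finally show ?thesis by (simp add: jpart_def Complex_eq mult_ac)
qed

lemma cdft_cshift_cdft_adj_sandwich:
  assumes "length \<rho> = length ns" "u < prod_list ns" "v < prod_list ns"
  shows "(\<Sum>y<prod_list ns. \<Sum>x<prod_list ns.
            of_cpx (cdft ns u x * cshift ns \<rho> x y) * q * of_cpx (cnj (cdft ns v y)))
       = of_cpx ((if u = v then fchar ns (lexlist ns ! u) \<rho> else 0) * cpart q)
       + of_cpx ((if lexlist ns ! v = mneg ns (lexlist ns ! u)
                  then fchar ns (lexlist ns ! u) \<rho> else 0) * jpart q) * qj"
  using cdft_cshift_cdft_adj[OF assms] cdft_cshift_cdft_transp[OF assms]
  unfolding sum_of_cpx_sandwich by (simp add: cmmul_def cadj_def ctransp_def sum_distrib_right)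

lemma qdft_circ_qdft_adj_entry:
  assumes "0 < s" "0 < t" "\<forall>\<rho>\<in>F. length \<rho> = length ns"
    and "i < prod_list ns * s" "j < prod_list ns * t"
  shows "mmul (prod_list ns * t)
           (mmul (prod_list ns * s) (kron (qdft ns) s s idm) (circ ns s t F p))
           (ctr (kron (qdft ns) t t idm)) i j
       = mirror_blocks s t (D1 ns F p) (D2 ns F p) (mneg ns) (lexlist ns) i j"
proof -
  define N u v \<alpha> \<delta> where "N = prod_list ns"
    and "u = i div s" and "v = j div t" and "\<alpha> = i mod s" and "\<delta> = j mod t"
  define Q \<chi> where "Q = cdft ns" and "\<chi> = fchar ns (lexlist ns ! u)"
  have uv: "u < N" "v < N" and \<alpha>\<delta>: "\<alpha> < s" "\<delta> < t"
    using assms by (simp_all add: N_def u_def v_def \<alpha>_def \<delta>_def less_mult_imp_div_less)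
  have "mmul (N * t) (mmul (N * s) (kron (qdft ns) s s idm) (circ ns s t F p))
          (ctr (kron (qdft ns) t t idm)) i j
      = (\<Sum>y<N. (\<Sum>x<N. of_cpx (Q u x) * circ ns s t F p (x * s + \<alpha>) (y * t + \<delta>))
                * of_cpx (cnj (Q v y)))"
    unfolding mmul_def ctr_kron_idm sum_kron_idm_left[OF assms(1)] sum_kron_idm_right[OF assms(2)]
    by (simp add: u_def v_def \<alpha>_def \<delta>_def Q_def qdft_eq_of_cpx ctr_def qcnj_of_cpx)
  also have "\<dots> = (\<Sum>\<rho>\<in>F. \<Sum>y<N. \<Sum>x<N.
      of_cpx (Q u x * cshift ns \<rho> x y) * p \<rho> \<alpha> \<delta> * of_cpx (cnj (Q v y)))"
    by (simp add: circ_entry[OF \<alpha>\<delta>] sum_distrib_left sum_distrib_right of_cpx_mult mult.assoc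
        sum.swap[of _ F])
  also have "\<dots> = (\<Sum>\<rho>\<in>F. of_cpx ((if u = v then \<chi> \<rho> else 0) * cpart (p \<rho> \<alpha> \<delta>))
      + of_cpx ((if lexlist ns ! v = mneg ns (lexlist ns ! u) then \<chi> \<rho> else 0)
                * jpart (p \<rho> \<alpha> \<delta>)) * qj)"
    using uv assms(3) unfolding N_def Q_def \<chi>_def
    by (intro sum.cong refl cdft_cshift_cdft_adj_sandwich) simp_all
  also have "\<dots> = mirror_blocks s t (D1 ns F p) (D2 ns F p) (mneg ns) (lexlist ns) i j"
    using uv nth_eq_iff_index_eq[OF distinct_lexlist, of v ns u]
    by (simp add: N_def u_def v_def \<alpha>_def \<delta>_def \<chi>_def mirror_blocks_def D1_eq_of_cpx
        D2_eq_of_cpx sum.distrib of_cpx_sum sum_distrib_right mult.commute)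
  finally show ?thesis by (simp add: N_def)
qed

lemma blockdiag_mult_kron_flipm:
  assumes "0 < t" "i < prod_list ns * s" "j < prod_list ns * t"
  shows "mmul (prod_list ns * t) (blockdiag ns s t B) (kron (flipm ns) t t idm) i j
       = (if lexlist ns ! (j div t) = mneg ns (lexlist ns ! (i div s))
          then B (lexlist ns ! (i div s)) (i mod s) (j mod t) else 0)"
proof -
  have u: "i div s < prod_list ns" and v: "j div t < prod_list ns"
    using assms by (simp_all add: less_mult_imp_div_less)
  have "mmul (prod_list ns * t) (blockdiag ns s t B) (kron (flipm ns) t t idm) i j
      = (\<Sum>y<prod_list ns. if y = i div s
           then B (lexlist ns ! y) (i mod s) (j mod t) * flipm ns y (j div t) else 0)"
    unfolding mmul_def sum_kron_idm_right[OF assms(1)] using assms(1)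
    by (intro sum.cong refl) (simp add: blockdiag_def)
  also have "\<dots> = B (lexlist ns ! (i div s)) (i mod s) (j mod t) * flipm ns (i div s) (j div t)"
    using u by simp
  finally show ?thesis
    by (simp add: flipm_eq_of_cpx cflip_eq_mneg[OF u v])
qed

lemma symbol_blocks_eq_mirror_blocks:
  assumes "0 < s" "0 < t" "i < prod_list ns * s" "j < prod_list ns * t"
  shows "madd (madd (blockdiag ns s t (Shat ns F p 0))
                 (mscal (blockdiag ns s t (Shat ns F p 1)) qi))
           (madd (mscal (mmul (prod_list ns * t) (blockdiag ns s t (Shat ns F p 2))
                               (kron (flipm ns) t t idm)) qj)
                 (mscal (mmul (prod_list ns * t) (blockdiag ns s t (Shat ns F p 3))
                               (kron (flipm ns) t t idm)) (qi * qj))) i j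
       = mirror_blocks s t (D1 ns F p) (D2 ns F p) (mneg ns) (lexlist ns) i j"
proof -
  have uv: "i div s < prod_list ns" "j div t < prod_list ns"
    using assms by (simp_all add: less_mult_imp_div_less)
  have qj_distrib: "a * qj + b * (qi * qj) = (a + b * qi) * qj" for a b :: quat
    by (simp add: distrib_right mult.assoc)
  have "lexlist ns ! (j div t) = lexlist ns ! (i div s) \<longleftrightarrow> i div s = j div t"
    using uv nth_eq_iff_index_eq[OF distinct_lexlist, of "j div t" ns "i div s"] by auto
  then show ?thesis
    using uv
    unfolding madd_def mscal_def blockdiag_mult_kron_flipm[OF assms(2-4)] mirror_blocks_def
    by (simp add: blockdiag_def D1_def D2_def madd_def mscal_def qj_distrib)
qed

section \<open>The reflection k \<mapsto> -k and the permutation P\<close>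

lemma mem_lexlist_Cons:
  "k \<in> set (lexlist (n # ns)) \<longleftrightarrow> (\<exists>a k'. k = a # k' \<and> a < n \<and> k' \<in> set (lexlist ns))"
  by auto

lemma length_mem_lexlist: "k \<in> set (lexlist ns) \<Longrightarrow> length k = length ns"
  by (induction ns arbitrary: k) auto

lemma mneg_Nil: "mneg [] k = []"
  by (simp add: mneg_def)

lemma mneg_in_lexlist: "k \<in> set (lexlist ns) \<Longrightarrow> mneg ns k \<in> set (lexlist ns)"
  by (induction ns arbitrary: k)
    (auto simp: mneg_Nil mneg_Cons nat_less_iff mem_lexlist_Cons simp del: lexlist.simps(2))

lemma neg_mod_neg_mod:
  assumes "a < n" shows "nat (- (- int a mod int n) mod int n) = a"
proof -
  have "- (- int a mod int n) mod int n = int a mod int n"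
    by (simp add: mod_minus_eq)
  then show ?thesis using assms by simp
qed

lemma mneg_mneg: "k \<in> set (lexlist ns) \<Longrightarrow> mneg ns (mneg ns k) = k"
  by (induction ns arbitrary: k) (auto simp: mneg_Nil mneg_Cons neg_mod_neg_mod)

lemma isFix_iff_mneg_eq: "k \<in> set (lexlist ns) \<Longrightarrow> isFix ns k \<longleftrightarrow> mneg ns k = k"
proof (induction ns arbitrary: k)
  case Nil
  then show ?case by (simp add: mneg_def isFix_def)
next
  case (Cons n ns)
  then obtain a k' where k: "k = a # k'" "a < n" "k' \<in> set (lexlist ns)"
    by auto
  have "isFix (n # ns) (a # k') \<longleftrightarrow> (2 * a) mod n = 0 \<and> isFix ns k'"
    unfolding isFix_def by (auto simp: less_Suc_eq_0_disj)
  moreover have "(2 * a) mod n = 0 \<longleftrightarrow> int n dvd (int a + int a)"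
    by (metis mult_2 of_nat_add int_dvd_int_iff dvd_eq_mod_eq_0)
  ultimately show ?case
    using Cons.IH[OF k(3)] int_dvd_add_iff_eq_neg_mod[OF k(2), of a] k(1)
    by (auto simp: mneg_Cons)
qed

lemma isFix_mneg: "k \<in> set (lexlist ns) \<Longrightarrow> isFix ns (mneg ns k) \<longleftrightarrow> isFix ns k"
  using isFix_iff_mneg_eq[of k ns] isFix_iff_mneg_eq[OF mneg_in_lexlist, of k ns] mneg_mneg[of k ns]
  by auto

lemma lex_less_asym: "lex_less a b \<Longrightarrow> \<not> lex_less b a"
  by (induction a b rule: lex_less.induct) auto

lemma lex_less_total: "length a = length b \<Longrightarrow> a \<noteq> b \<Longrightarrow> lex_less a b \<or> lex_less b a"
proof (induction a arbitrary: b)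
  case (Cons x a)
  then obtain y b' where "b = y # b'" by (cases b) auto
  with Cons show ?case by (cases "x = y") auto
qed simp

lemma inK_mneg: "k \<in> set (lexlist ns) \<Longrightarrow> inK ns k \<Longrightarrow> \<not> inK ns (mneg ns k)"
  using mneg_mneg[of k ns] lex_less_asym by (auto simp: inK_def)

lemma inK_or_inK_mneg:
  assumes "k \<in> set (lexlist ns)" "\<not> isFix ns k"
  shows "inK ns k \<or> inK ns (mneg ns k)"
proof -
  have "length (mneg ns k) = length k" "mneg ns k \<noteq> k"
    using assms isFix_iff_mneg_eq[of k ns] length_mem_lexlist[of _ ns] mneg_in_lexlist[of k ns]
    by auto
  then show ?thesis
    using lex_less_total assms isFix_mneg[of k ns] mneg_mneg[of k ns] by (auto simp: inK_def)
qed

lemma set_concat_pairs: "set (concat (map (\<lambda>x. [x, f x]) xs)) = set xs \<union> f ` set xs"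
  by (induction xs) auto

lemma distinct_concat_pairs:
  assumes "distinct xs" "\<forall>x\<in>set xs. f x \<notin> set xs" "inj_on f (set xs)"
  shows "distinct (concat (map (\<lambda>x. [x, f x]) xs))"
  using assms
proof (induction xs)
  case (Cons x xs)
  have "f x \<notin> f ` set xs" "x \<notin> f ` set xs"
    using Cons.prems by (auto simp: inj_on_def)
  with Cons show ?case by (auto simp: set_concat_pairs inj_on_insert)
qed simp

lemma set_ordlist: "set (ordlist ns) = set (lexlist ns)"
  using mneg_in_lexlist[of _ ns] inK_or_inK_mneg[of _ ns] mneg_mneg[of _ ns]
  by (auto simp: ordlist_def set_concat_pairs image_iff inK_def) metis

lemma distinct_ordlist: "distinct (ordlist ns)"
proof -
  let ?K = "filter (inK ns) (lexlist ns)"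
  have "distinct (concat (map (\<lambda>k. [k, mneg ns k]) ?K))"
    using distinct_lexlist[of ns] inK_mneg[of _ ns] mneg_mneg[of _ ns]
    by (intro distinct_concat_pairs) (auto intro: inj_on_inverseI)
  moreover have "\<not> isFix ns k" if "k \<in> set (concat (map (\<lambda>k. [k, mneg ns k]) ?K))" for k
    using that isFix_mneg[of _ ns] by (auto simp: set_concat_pairs inK_def)
  ultimately show ?thesis
    using distinct_lexlist[of ns] by (auto simp: ordlist_def)
qed

lemma length_ordlist: "length (ordlist ns) = prod_list ns"
  using distinct_card[OF distinct_ordlist[of ns]] distinct_card[OF distinct_lexlist[of ns]]
    set_ordlist[of ns]
  by simp

definition list_pos :: "'a list \<Rightarrow> 'a \<Rightarrow> nat" where
  "list_pos xs x = (THE i. i < length xs \<and> xs ! i = x)"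

lemma list_pos:
  assumes "distinct xs" "x \<in> set xs"
  shows "list_pos xs x < length xs" "xs ! list_pos xs x = x"
  using theI'[OF distinct_Ex1[OF assms]] unfolding list_pos_def by simp_all

lemma nth_eq_iff_eq_list_pos:
  assumes "distinct xs" "x \<in> set xs" "i < length xs"
  shows "xs ! i = x \<longleftrightarrow> i = list_pos xs x"
  using list_pos[OF assms(1,2)] nth_eq_iff_index_eq[OF assms(1) assms(3), of "list_pos xs x"]
  by auto

definition ordperm :: "nat list \<Rightarrow> nat \<Rightarrow> nat" where
  "ordperm ns r = list_pos (lexlist ns) (ordlist ns ! r)"

lemma ordperm:
  assumes "r < prod_list ns"
  shows "ordperm ns r < prod_list ns" "lexlist ns ! ordperm ns r = ordlist ns ! r"
proof -
  have "ordlist ns ! r \<in> set (lexlist ns)"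
    using assms nth_mem[of r "ordlist ns"] by (simp add: length_ordlist set_ordlist)
  from list_pos[OF distinct_lexlist this]
  show "ordperm ns r < prod_list ns" "lexlist ns ! ordperm ns r = ordlist ns ! r"
    by (simp_all add: ordperm_def)
qed

lemma Pperm_eq_ordperm:
  assumes "r < prod_list ns" "x < prod_list ns"
  shows "Pperm ns r x = (if x = ordperm ns r then 1 else 0)"
proof -
  have "ordlist ns ! r \<in> set (lexlist ns)"
    using assms nth_mem[of r "ordlist ns"] by (simp add: length_ordlist set_ordlist)
  from nth_eq_iff_eq_list_pos[OF distinct_lexlist this, of x] show ?thesis
    using assms by (simp add: Pperm_def ordperm_def)
qed

lemma sum_kron_Pperm_left:
  assumes "0 < s" "i < prod_list ns * s"
  shows "(\<Sum>a<prod_list ns * s. kron (Pperm ns) s s idm i a * g a)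
       = g (ordperm ns (i div s) * s + i mod s)"
proof -
  have r: "i div s < prod_list ns"
    using assms(2) by (simp add: less_mult_imp_div_less)
  have "(\<Sum>x<prod_list ns. Pperm ns (i div s) x * g (x * s + i mod s))
      = (\<Sum>x<prod_list ns. if x = ordperm ns (i div s) then g (x * s + i mod s) else 0)"
    by (intro sum.cong refl) (simp add: Pperm_eq_ordperm[OF r])
  then show ?thesis
    unfolding sum_kron_idm_left[OF assms(1)] using ordperm(1)[OF r] by simp
qed

lemma sum_kron_Pperm_adj_right:
  assumes "0 < t" "j < prod_list ns * t"
  shows "(\<Sum>c<prod_list ns * t. g c * ctr (kron (Pperm ns) t t idm) c j)
       = g (ordperm ns (j div t) * t + j mod t)"
proof -
  have r: "j div t < prod_list ns"
    using assms(2) by (simp add: less_mult_imp_div_less)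
  have "(\<Sum>x<prod_list ns. g (x * t + j mod t) * ctr (Pperm ns) x (j div t))
      = (\<Sum>x<prod_list ns. if x = ordperm ns (j div t) then g (x * t + j mod t) else 0)"
    by (intro sum.cong refl) (simp add: ctr_def Pperm_eq_ordperm[OF r] qcnj_indicator)
  then show ?thesis
    unfolding ctr_kron_idm sum_kron_idm_right[OF assms(1)] using ordperm(1)[OF r] by simp
qed

lemma mirror_blocks_reindex:
  assumes "0 < s" "0 < t" "i div s < length ks'" "j div t < length ks'"
    and "\<And>r. r < length ks' \<Longrightarrow> \<sigma> r < length ks \<and> ks ! \<sigma> r = ks' ! r"
  shows "mirror_blocks s t d1 d2 mn ks (\<sigma> (i div s) * s + i mod s) (\<sigma> (j div t) * t + j mod t)
       = mirror_blocks s t d1 d2 mn ks' i j"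
  using assms(1-4) assms(5)[of "i div s"] assms(5)[of "j div t"] by (simp add: mirror_blocks_def)

lemma mult_add_less_mult:
  fixes a b N s :: nat
  assumes "a < N" "b < s" shows "a * s + b < N * s"
  using assms mult_le_mono1[of "Suc a" N s] by simp

lemma Pperm_conj_mirror_blocks:
  assumes "0 < s" "0 < t" "i < prod_list ns * s" "j < prod_list ns * t"
    and M: "\<And>a b. a < prod_list ns * s \<Longrightarrow> b < prod_list ns * t \<Longrightarrow>
              M a b = mirror_blocks s t d1 d2 mn (lexlist ns) a b"
  shows "mmul (prod_list ns * t) (mmul (prod_list ns * s) (kron (Pperm ns) s s idm) M)
           (ctr (kron (Pperm ns) t t idm)) i j
       = mirror_blocks s t d1 d2 mn (ordlist ns) i j"
proof -
  let ?\<sigma> = "ordperm ns"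
  have uv: "i div s < prod_list ns" "j div t < prod_list ns"
    using assms(3,4) by (simp_all add: less_mult_imp_div_less)
  have "mmul (prod_list ns * t) (mmul (prod_list ns * s) (kron (Pperm ns) s s idm) M)
          (ctr (kron (Pperm ns) t t idm)) i j
      = M (?\<sigma> (i div s) * s + i mod s) (?\<sigma> (j div t) * t + j mod t)"
    unfolding mmul_def sum_kron_Pperm_left[OF assms(1,3)] sum_kron_Pperm_adj_right[OF assms(2,4)] ..
  also have "\<dots> = mirror_blocks s t d1 d2 mn (lexlist ns)
                     (?\<sigma> (i div s) * s + i mod s) (?\<sigma> (j div t) * t + j mod t)"
    using assms(1,2) ordperm(1)[OF uv(1)] ordperm(1)[OF uv(2)]
    by (intro M mult_add_less_mult) simp_all
  also have "\<dots> = mirror_blocks s t d1 d2 mn (ordlist ns) i j"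
    using assms(1,2) uv ordperm by (intro mirror_blocks_reindex) (simp_all add: length_ordlist)
  finally show ?thesis .
qed

section \<open>Block direct sums\<close>

lemma div_mod_sub_mult:
  fixes i s L :: nat
  assumes "0 < s" "L * s \<le> i"
  shows "i div s = L + (i - L * s) div s" "i mod s = (i - L * s) mod s"
proof -
  obtain d where "i = L * s + d" using assms(2) le_Suc_ex by blast
  then show "i div s = L + (i - L * s) div s" "i mod s = (i - L * s) mod s"
    using assms(1) by simp_all
qed

lemma mirror_blocks_append:
  assumes "0 < s" "0 < t" and decoupled: "\<forall>x\<in>set ks1. \<forall>y\<in>set ks2. x \<noteq> y \<and> mn x \<noteq> y \<and> mn y \<noteq> x"
  shows "mirror_blocks s t d1 d2 mn (ks1 @ ks2) i j
       = (if i < length ks1 * s \<and> j < length ks1 * t then mirror_blocks s t d1 d2 mn ks1 i j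
          else if length ks1 * s \<le> i \<and> length ks1 * t \<le> j
          then mirror_blocks s t d1 d2 mn ks2 (i - length ks1 * s) (j - length ks1 * t)
          else 0)"
proof -
  let ?L = "length ks1"
  have i: "i div s < ?L \<longleftrightarrow> i < ?L * s" and j: "j div t < ?L \<longleftrightarrow> j < ?L * t"
    using assms(1,2) by (simp_all add: div_less_iff_less_mult)
  consider "i < ?L * s" "j < ?L * t" | "?L * s \<le> i" "?L * t \<le> j"
    | "i < ?L * s" "?L * t \<le> j" | "?L * s \<le> i" "j < ?L * t"
    by linarith
  then show ?thesis
  proof cases
    case 1
    then show ?thesis using i j by (simp add: mirror_blocks_def nth_append)
  next
    case 2
    then show ?thesis
      using div_mod_sub_mult[OF assms(1) 2(1)] div_mod_sub_mult[OF assms(2) 2(2)]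
      by (simp add: mirror_blocks_def nth_append)
  next
    case 3
    have "ks2 ! (j div t - ?L) \<noteq> ks1 ! (i div s) \<and> ks2 ! (j div t - ?L) \<noteq> mn (ks1 ! (i div s))"
      if "j div t - ?L < length ks2"
      using bspec[OF bspec[OF decoupled nth_mem] nth_mem[OF that], of "i div s"] 3 i by auto
    then show ?thesis
      using 3 i j by (simp add: mirror_blocks_def nth_append del: div_less_iff_less_mult)
  next
    case 4
    have "ks1 ! (j div t) \<noteq> ks2 ! (i div s - ?L) \<and> ks1 ! (j div t) \<noteq> mn (ks2 ! (i div s - ?L))"
      if "i div s - ?L < length ks2"
      using bspec[OF bspec[OF decoupled nth_mem] nth_mem[OF that], of "j div t"] 4 j by auto
    then show ?thesis
      using 4 i j by (simp add: mirror_blocks_def nth_append del: div_less_iff_less_mult)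
  qed
qed

lemma dsum_eq_mirror_blocks:
  assumes "0 < s" "0 < t" "distinct (concat kss)" "\<forall>ks\<in>set kss. mn ` set ks \<subseteq> set ks"
    and "list_all2 (\<lambda>(r, c, M) ks. r = length ks * s \<and> c = length ks * t
           \<and> (\<forall>i<r. \<forall>j<c. M i j = mirror_blocks s t d1 d2 mn ks i j)) bs kss"
  shows "dsum bs = mirror_blocks s t d1 d2 mn (concat kss)"
  using assms(3-)
proof (induction bs arbitrary: kss)
  case Nil
  then show ?case by (simp add: mirror_blocks_def fun_eq_iff)
next
  case (Cons b bs)
  then obtain ks kss' where kss: "kss = ks # kss'" by (cases kss) auto
  obtain r c M where b: "b = (r, c, M)" by (cases b) auto
  have decoupled: "\<forall>x\<in>set ks. \<forall>y\<in>set (concat kss'). x \<noteq> y \<and> mn x \<noteq> y \<and> mn y \<noteq> x"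
  proof -
    have "set ks \<inter> set (concat kss') = {}" "mn ` set ks \<subseteq> set ks"
      "mn ` set (concat kss') \<subseteq> set (concat kss')"
      using Cons.prems(1,2) by (auto simp: kss) blast
    then show ?thesis by blast
  qed
  have IH: "dsum bs = mirror_blocks s t d1 d2 mn (concat kss')"
    using Cons by (simp add: kss)
  have rc: "r = length ks * s" "c = length ks * t"
    and M: "\<forall>i<r. \<forall>j<c. M i j = mirror_blocks s t d1 d2 mn ks i j"
    using Cons.prems(3) by (simp_all add: kss b)
  show ?case
  proof (intro ext)
    fix i j
    show "dsum (b # bs) i j = mirror_blocks s t d1 d2 mn (concat kss) i j"
      using M by (simp add: kss b rc IH mirror_blocks_append[OF assms(1,2) decoupled])
  qed
qed

lemma mirror_blocks_fixed_key:
  assumes "mn k = k" "i < s" "j < t"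
  shows "madd (d1 k) (d2 k) i j = mirror_blocks s t d1 d2 mn [k] i j"
  using assms by (simp add: mirror_blocks_def madd_def)

lemma mirror_blocks_key_pair:
  assumes "mn k \<noteq> k" "mn (mn k) = k" "i < 2 * s" "j < 2 * t"
  shows "blk2 s t (d1 k) (d2 k) (d2 (mn k)) (d1 (mn k)) i j
       = mirror_blocks s t d1 d2 mn [k, mn k] i j"
proof -
  have "i div s = (if i < s then 0 else 1)" "i mod s = (if i < s then i else i - s)"
    "j div t = (if j < t then 0 else 1)" "j mod t = (if j < t then j else j - t)"
    using assms(3,4) by (auto simp: div_if mod_if)
  then show ?thesis
    using assms by (cases "i < s"; cases "j < t") (simp_all add: mirror_blocks_def blk2_def)
qed

lemma dsum_fixed_and_pairs_eq_mirror_blocks: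
  assumes "0 < s" "0 < t"
  shows "dsum (map (\<lambda>k. (s, t, madd (d1 k) (d2 k))) (filter (isFix ns) (lexlist ns))
             @ map (\<lambda>k. (2 * s, 2 * t, blk2 s t (d1 k) (d2 k) (d2 (mneg ns k)) (d1 (mneg ns k))))
                   (filter (inK ns) (lexlist ns)))
       = mirror_blocks s t d1 d2 (mneg ns) (ordlist ns)"
proof -
  let ?kss = "map (\<lambda>k. [k]) (filter (isFix ns) (lexlist ns))
            @ map (\<lambda>k. [k, mneg ns k]) (filter (inK ns) (lexlist ns))"
  have "concat ?kss = ordlist ns"
    by (simp add: ordlist_def)
  moreover have "\<forall>ks\<in>set ?kss. mneg ns ` set ks \<subseteq> set ks"
    using isFix_iff_mneg_eq[of _ ns] mneg_mneg[of _ ns] by auto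
  moreover have "list_all2 (\<lambda>(r, c, M) ks. r = length ks * s \<and> c = length ks * t
        \<and> (\<forall>i<r. \<forall>j<c. M i j = mirror_blocks s t d1 d2 (mneg ns) ks i j))
      (map (\<lambda>k. (s, t, madd (d1 k) (d2 k))) (filter (isFix ns) (lexlist ns))
       @ map (\<lambda>k. (2 * s, 2 * t, blk2 s t (d1 k) (d2 k) (d2 (mneg ns k)) (d1 (mneg ns k))))
             (filter (inK ns) (lexlist ns))) ?kss"
    using isFix_iff_mneg_eq[of _ ns] mneg_mneg[of _ ns]
    by (intro list_all2_appendI)
      (auto simp: list_all2_map1 list_all2_map2 list_all2_same inK_def
         mirror_blocks_fixed_key[where mn = "mneg ns"] mirror_blocks_key_pair)
  ultimately show ?thesis
    using dsum_eq_mirror_blocks[OF assms, of ?kss "mneg ns"] distinct_ordlist[of ns] by simp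
qed

theorem mainTheorem16:
  fixes ns :: "nat list" and s t :: nat and F :: "int list set" and p :: "int list \<Rightarrow> qmat"
  assumes "\<forall>l<length ns. 0 < ns ! l"
    and "0 < s" and "0 < t"
    and "finite F" and "\<forall>\<rho>\<in>F. length \<rho> = length ns"
  defines "N \<equiv> prod_list ns"
  defines "UL \<equiv> kron (qdft ns) s s idm"
  defines "UR \<equiv> kron (qdft ns) t t idm"
  defines "AIt \<equiv> kron (flipm ns) t t idm"
  defines "Lam \<equiv> (\<lambda>l. blockdiag ns s t (Shat ns F p l))"
  defines "PiL \<equiv> kron (Pperm ns) s s idm"
  defines "PiR \<equiv> kron (Pperm ns) t t idm"
  defines "M \<equiv> mmul (N * t) (mmul (N * s) UL (circ ns s t F p)) (ctr UR)"
  shows "meq (N * s) (N * t) M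
           (madd (madd (Lam 0) (mscal (Lam 1) qi))
                 (madd (mscal (mmul (N * t) (Lam 2) AIt) qj)
                       (mscal (mmul (N * t) (Lam 3) AIt) (qi * qj))))
       \<and> meq (N * s) (N * t)
           (mmul (N * t) (mmul (N * s) PiL M) (ctr PiR))
           (dsum (map (\<lambda>k. (s, t, madd (D1 ns F p k) (D2 ns F p k)))
                      (filter (isFix ns) (lexlist ns))
                @ map (\<lambda>k. (2 * s, 2 * t, blk2 s t (D1 ns F p k) (D2 ns F p k)
                                                 (D2 ns F p (mneg ns k)) (D1 ns F p (mneg ns k))))
                      (filter (inK ns) (lexlist ns))))"
proof -
  have M: "M i j = mirror_blocks s t (D1 ns F p) (D2 ns F p) (mneg ns) (lexlist ns) i j"
    if "i < N * s" "j < N * t" for i j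
    using qdft_circ_qdft_adj_entry[OF assms(2,3,5)] that by (simp add: M_def UL_def UR_def N_def)
  show ?thesis
    unfolding meq_def dsum_fixed_and_pairs_eq_mirror_blocks[OF assms(2,3)]
  proof (intro conjI allI impI)
    fix i j assume ij: "i < N * s" "j < N * t"
    then show "M i j = madd (madd (Lam 0) (mscal (Lam 1) qi))
        (madd (mscal (mmul (N * t) (Lam 2) AIt) qj)
              (mscal (mmul (N * t) (Lam 3) AIt) (qi * qj))) i j"
      using symbol_blocks_eq_mirror_blocks[OF assms(2,3)] by (simp add: M Lam_def AIt_def N_def)
    show "mmul (N * t) (mmul (N * s) PiL M) (ctr PiR) i j
        = mirror_blocks s t (D1 ns F p) (D2 ns F p) (mneg ns) (ordlist ns) i j"
      using Pperm_conj_mirror_blocks[OF assms(2,3) ij[unfolded N_def] M[unfolded N_def]]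
      by (simp add: PiL_def PiR_def N_def)
  qed
qed

end
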